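(* Let $\mathcal{P}_1$ and $\mathcal{P}_2$ be nonempty convex sets (convex subsets of real vector spaces), and let $u_1, u_2 : \mathcal{P}_1 \times \mathcal{P}_2 \to \mathbb{R}$ be functions such that, for each $u \in \{u_1, u_2\}$, all $\sigma = (\sigma_1,\sigma_2), \tau = (\tau_1,\tau_2) \in \mathcal{P}_1 \times \mathcal{P}_2$ and all $\alpha, \beta \in [0,1]$, $$u\bigl(\alpha\sigma_1 + (1-\alpha)\tau_1,\ \beta\sigma_2 + (1-\beta)\tau_2\bigr) = \alpha\, u\bigl(\sigma_1,\ \beta\sigma_2 + (1-\beta)\tau_2\bigr) + (1-\alpha)\, u\bigl(\tau_1,\ \beta\sigma_2 + (1-\beta)\tau_2\bigr)$$ $$= \beta\, u\bigl(\alpha\sigma_1 + (1-\alpha)\tau_1,\ \sigma_2\bigr) + (1-\beta)\, u\bigl(\alpha\sigma_1 + (1-\alpha)\tau_1,\ \tau_2\bigr).$$ Then the following are equivalent: (a) for all $\sigma, \tau \in \mathcal{P}_1 \times \mathcal{P}_2$: $u_1(\sigma) \geq u_1(\tau)$ if and only if $u_2(\sigma) \leq u_2(\tau)$; (b) there exist $\alpha, \beta \in \mathbb{R}$ with $\alpha > 0$ such that $u_2(\sigma) = -\alpha\, u_1(\sigma) + \beta$ for all $\sigma \in \mathcal{P}_1 \times \mathcal{P}_2$; (c) there exist $\gamma, \delta \in \mathbb{R}$ with $\gamma > 0$ such that, setting $v_1 = \gamma u_1 + \delta$, one has $v_1(\sigma) + u_2(\sigma) = 0$ for all $\sigma \in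 \mathcal{P}_1 \times \mathcal{P}_2$.
   Context: A two-person game is a quadruple $\langle \mathcal{P}_1, \mathcal{P}_2, u_1, u_2\rangle$ of strategy sets and real-valued payoff functions on $\mathcal{P}_1\times\mathcal{P}_2$. Condition (a) says the game is adversarial (strictly competitive); the displayed identities say the game is bilinear (bi-affine); (c) says the game obtained by replacing $u_1$ with a positive affine transformation of it is zero-sum. A function $f$ is a positive affine transformation of $g$ if $f = a g + b$ for some reals $a > 0$, $b$. *)

theory Defs
  imports "HOL-Analysis.Analysis"
begin

definition bilinear_game_payoff ::
  "'a::real_vector set \<Rightarrow> 'b::real_vector set \<Rightarrow> ('a \<times> 'b \<Rightarrow> real) \<Rightarrow> bool" where
  "bilinear_game_payoff P1 P2 u \<longleftrightarrow>
     (\<forall>s1\<in>P1. \<forall>s2\<in>P2. \<forall>t1\<in>P1. \<forall>t2\<in>P2. \<forall>\<alpha>\<in>{0..1::real}. \<forall>\<beta>\<in>{0..1::real}.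
        u (\<alpha> *\<^sub>R s1 + (1 - \<alpha>) *\<^sub>R t1, \<beta> *\<^sub>R s2 + (1 - \<beta>) *\<^sub>R t2)
          = \<alpha> * u (s1, \<beta> *\<^sub>R s2 + (1 - \<beta>) *\<^sub>R t2)
            + (1 - \<alpha>) * u (t1, \<beta> *\<^sub>R s2 + (1 - \<beta>) *\<^sub>R t2)
        \<and> \<alpha> * u (s1, \<beta> *\<^sub>R s2 + (1 - \<beta>) *\<^sub>R t2)
            + (1 - \<alpha>) * u (t1, \<beta> *\<^sub>R s2 + (1 - \<beta>) *\<^sub>R t2)
          = \<beta> * u (\<alpha> *\<^sub>R s1 + (1 - \<alpha>) *\<^sub>R t1, s2)
            + (1 - \<beta>) * u (\<alpha> *\<^sub>R s1 + (1 - \<alpha>) *\<^sub>R t1, t2))"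

end

theory Submission
  imports Defs
begin

(* Condition (a) makes u2 a strictly decreasing function f of u1 on P1 \<times> P2. Along a segment on
   which only one player's strategy moves, both payoffs are affine in the parameter, so f is
   affine on the interval between the u1-values of its endpoints. For profiles (s1, s2) and
   (t1, t2), the segments {p} \<times> [s2, t2] with p \<in> [s1, t1] sweep a square on which u1 is
   bilinear; those with p close to s1 straddle the value u1 (s1, t2), which forces the affine pieces
   of f on either side of it to agree. Hence f is affine between any two values of u1, thus on the
   whole range of u1, and being decreasing it has negative slope. *)

definition affine_on :: "real set \<Rightarrow> (real \<Rightarrow> real) \<Rightarrow> bool" where
  "affine_on I f \<longleftrightarrow> (\<exists>m k. \<forall>x\<in>I. f x = m * x + k)"

lemma affine_on_subset: "affine_on J f \<Longrightarrow> I \<subseteq> J \<Longrightarrow> affine_on I f"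
  unfolding affine_on_def by blast

lemma affine_coeffs_eq_if_agree_at_two_points:
  fixes p q m k m' k' :: real
  assumes "p \<noteq> q" "m * p + k = m' * p + k'" "m * q + k = m' * q + k'"
  shows "m = m' \<and> k = k'"
proof -
  have "(m - m') * (p - q) = 0" using assms(2,3) by (simp add: algebra_simps)
  then have "m = m'" using assms(1) by simp
  then show ?thesis using assms(2) by simp
qed

lemma affine_on_Un:
  assumes "affine_on I f" "affine_on J f" "p \<noteq> q" "p \<in> I \<inter> J" "q \<in> I \<inter> J"
  shows "affine_on (I \<union> J) f"
proof -
  obtain m k where I: "\<forall>x\<in>I. f x = m * x + k" using assms(1) unfolding affine_on_def by blast
  obtain m' k' where J: "\<forall>x\<in>J. f x = m' * x + k'" using assms(2) unfolding affine_on_def by blast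
  have "m = m' \<and> k = k'"
    using I J assms(3-5) by (intro affine_coeffs_eq_if_agree_at_two_points[of p q]) auto
  then have "\<forall>x\<in>I \<union> J. f x = m * x + k" using I J by auto
  then show ?thesis unfolding affine_on_def by blast
qed

lemma affine_on_closed_segment:
  assumes "\<And>l. 0 \<le> l \<Longrightarrow> l \<le> 1 \<Longrightarrow> f (l * a + (1 - l) * b) = l * f a + (1 - l) * f b"
  shows "affine_on (closed_segment a b) f"
proof (cases "a = b")
  case True
  then show ?thesis unfolding affine_on_def by (intro exI[of _ 0] exI[of _ "f a"]) simp
next
  case False
  define m where "m = (f a - f b) / (a - b)"
  have m: "m * (a - b) = f a - f b" using False unfolding m_def by simp
  have "f x = m * x + (f b - m * b)" if "x \<in> closed_segment a b" for x
  proof -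
    have "\<exists>u. 0 \<le> u \<and> u \<le> 1 \<and> x = (1 - u) * a + u * b"
      using that unfolding in_segment by auto
    then obtain u where u: "0 \<le> u" "u \<le> 1" "x = (1 - u) * a + u * b" by blast
    have "f x = (1 - u) * f a + u * f b" using assms[of "1 - u"] u by simp
    also have "\<dots> = (1 - u) * (f a - f b) + f b" by (simp add: algebra_simps)
    also have "\<dots> = m * x + (f b - m * b)" unfolding m[symmetric] u(3) by (simp add: algebra_simps)
    finally show ?thesis .
  qed
  then show ?thesis unfolding affine_on_def by blast
qed

lemma ex_intercept_on_subsingleton:
  fixes f :: "real \<Rightarrow> real"
  assumes "\<forall>x\<in>R. \<forall>y\<in>R. x = y"
  shows "\<exists>k. \<forall>x\<in>R. f x = m * x + k"
proof (cases "R = {}")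
  case False
  then obtain p where "p \<in> R" by blast
  then show ?thesis using assms by (intro exI[of _ "f p - m * p"]) auto
qed simp

lemma affine_on_if_affine_on_closed_segments:
  assumes "\<And>p q. p \<in> R \<Longrightarrow> q \<in> R \<Longrightarrow> affine_on (closed_segment p q) f"
  shows "affine_on R f"
proof (cases "\<exists>p\<in>R. \<exists>q\<in>R. p \<noteq> q")
  case False
  then show ?thesis using ex_intercept_on_subsingleton[of R f 0] unfolding affine_on_def by blast
next
  case True
  then obtain p q where pq: "p \<in> R" "q \<in> R" "p \<noteq> q" by blast
  obtain m k where mk: "\<forall>x\<in>closed_segment p q. f x = m * x + k"
    using assms[OF pq(1,2)] unfolding affine_on_def by blast
  have "f r = m * r + k" if r: "r \<in> R" for r
  proof -
    obtain x y where xy: "x \<in> R" "y \<in> R" "{p, q, r} \<subseteq> closed_segment x y"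
      using pq(1,2) r by (cases "p \<le> q"; cases "r \<le> p"; cases "r \<le> q")
        (force simp: closed_segment_eq_real_ivl)+
    obtain m' k' where mk': "\<forall>x\<in>closed_segment x y. f x = m' * x + k'"
      using assms[OF xy(1,2)] unfolding affine_on_def by blast
    have "f p = m' * p + k'" "f q = m' * q + k'" using mk' xy(3) by auto
    moreover have "f p = m * p + k" "f q = m * q + k" using mk by (auto simp: ends_in_segment)
    ultimately have "m' = m \<and> k' = k"
      using pq(3) by (intro affine_coeffs_eq_if_agree_at_two_points) auto
    then show ?thesis using mk' xy(3) by auto
  qed
  then show ?thesis unfolding affine_on_def by blast
qed

lemma strict_antimono_affine_on_neg_slope:
  assumes "affine_on R f" "strict_antimono_on R f"
  shows "\<exists>m k. m < 0 \<and> (\<forall>x\<in>R. f x = m * x + k)"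
proof (cases "\<exists>p\<in>R. \<exists>q\<in>R. p < q")
  case False
  then have "\<forall>x\<in>R. \<forall>y\<in>R. x = y" by (meson linorder_neqE)
  then obtain k where "\<forall>x\<in>R. f x = -1 * x + k" using ex_intercept_on_subsingleton by blast
  then show ?thesis by (intro exI[of _ "-1"] exI[of _ k]) simp
next
  case True
  then obtain p q where pq: "p \<in> R" "q \<in> R" "p < q" by blast
  obtain m k where mk: "\<forall>x\<in>R. f x = m * x + k" using assms(1) unfolding affine_on_def by blast
  have "f q < f p" using monotone_onD[OF assms(2) pq] .
  then have "m * q < m * p" using mk pq(1,2) by simp
  then have "m < 0" using pq(3) mult_less_cancel_left[of m q p] by linarith
  then show ?thesis using mk by blast
qed

lemma exists_convex_combination_same_side:
  fixes a c d :: real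
  assumes "a \<noteq> c"
  shows "\<exists>\<alpha>. 0 < \<alpha> \<and> \<alpha> < 1 \<and> 0 < (\<alpha> * a + (1 - \<alpha>) * d - c) * (a - c)"
proof -
  have "((\<lambda>\<alpha>. (\<alpha> * a + (1 - \<alpha>) * d - c) * (a - c)) \<longlongrightarrow> (a - c)\<^sup>2) (at_left 1)"
    by (auto intro!: tendsto_eq_intros simp: power2_eq_square)
  moreover have "0 < (a - c)\<^sup>2" using assms by simp
  ultimately have "\<forall>\<^sub>F \<alpha> in at_left 1. 0 < (\<alpha> * a + (1 - \<alpha>) * d - c) * (a - c)"
    by (rule order_tendstoD)
  moreover have "\<forall>\<^sub>F \<alpha> in at_left (1::real). \<alpha> \<in> {0<..<1}" by (rule eventually_at_left_real) simp
  ultimately have "\<forall>\<^sub>F \<alpha> in at_left (1::real). 0 < \<alpha> \<and> \<alpha> < 1 \<and> 0 < (\<alpha> * a + (1 - \<alpha>) * d - c) * (a - c)"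
    by eventually_elim auto
  then show ?thesis using eventually_happens' trivial_limit_at_left_real by blast
qed

(* a, c, d, b are the values of a bilinear function at the corners (1,1), (1,0), (0,1), (0,0) of
   the unit square: f is assumed affine along the edge from (1,0) to (0,0) and along each segment
   {\<alpha>} \<times> [0,1]. *)
lemma affine_on_square_diagonal:
  fixes a b c d :: real
  assumes bottom: "affine_on (closed_segment c b) f"
    and columns: "\<And>\<alpha>. 0 \<le> \<alpha> \<Longrightarrow> \<alpha> \<le> 1 \<Longrightarrow>
      affine_on (closed_segment (\<alpha> * a + (1 - \<alpha>) * d) (\<alpha> * c + (1 - \<alpha>) * b)) f"
  shows "affine_on (closed_segment a b) f"
proof -
  have top: "affine_on (closed_segment a c) f" using columns[of 1] by simp
  show ?thesis
  proof (cases "c \<in> open_segment a b")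
    case False
    then have "closed_segment a b \<subseteq> closed_segment a c \<or> closed_segment a b \<subseteq> closed_segment c b"
      by (auto simp: closed_segment_eq_real_ivl open_segment_eq_real_ivl split: if_splits)
    then show ?thesis using top bottom affine_on_subset by blast
  next
    case True
    then have opposite: "(a - c) * (b - c) < 0"
      by (auto simp: open_segment_eq_real_ivl mult_less_0_iff split: if_splits)
    then have "a \<noteq> c" by auto
    then obtain \<alpha> where \<alpha>: "0 < \<alpha>" "\<alpha> < 1" "0 < (\<alpha> * a + (1 - \<alpha>) * d - c) * (a - c)"
      using exists_convex_combination_same_side by blast
    define v w where "v = \<alpha> * a + (1 - \<alpha>) * d" and "w = \<alpha> * c + (1 - \<alpha>) * b"
    have column: "affine_on (closed_segment v w) f" unfolding v_def w_def using \<alpha> by (intro columns) auto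
    have "w \<in> closed_segment c b"
      unfolding w_def in_segment using \<alpha> by (intro exI[of _ "1 - \<alpha>"]) auto
    have "(w - c) * (b - c) = (1 - \<alpha>) * (b - c)\<^sup>2"
      unfolding w_def by (simp add: power2_eq_square algebra_simps)
    moreover have "b \<noteq> c" using opposite by auto
    ultimately have "0 < (w - c) * (b - c)" using \<alpha>(2) by simp
    moreover have "0 < (v - c) * (a - c)" using \<alpha>(3) unfolding v_def .
    ultimately have "c \<in> closed_segment v w" "w \<noteq> c" "v \<noteq> c"
      and "v \<in> closed_segment a c \<or> a \<in> closed_segment v c"
      using opposite by (auto simp: closed_segment_eq_real_ivl zero_less_mult_iff mult_less_0_iff)
    moreover have "closed_segment v c \<subseteq> closed_segment v w"
      using \<open>c \<in> closed_segment v w\<close> by (simp add: subset_closed_segment)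
    ultimately have "v \<in> closed_segment a c \<inter> closed_segment v w \<and> v \<noteq> c
        \<or> a \<in> closed_segment a c \<inter> closed_segment v w \<and> a \<noteq> c"
      using \<open>a \<noteq> c\<close> by auto
    then have "affine_on (closed_segment a c \<union> closed_segment v w) f"
      using affine_on_Un[OF top column] \<open>c \<in> closed_segment v w\<close> by auto
    then have "affine_on (closed_segment a c \<union> closed_segment v w \<union> closed_segment c b) f"
      using affine_on_Un[OF _ bottom, of _ c w] \<open>c \<in> closed_segment v w\<close> \<open>w \<noteq> c\<close>
        \<open>w \<in> closed_segment c b\<close> by auto
    moreover have "closed_segment a b \<subseteq> closed_segment a c \<union> closed_segment c b"
      using True by (auto simp: closed_segment_eq_real_ivl open_segment_eq_real_ivl split: if_splits)
    ultimately show ?thesis using affine_on_subset by blast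
  qed
qed

lemma bilinear_game_payoff_fst:
  assumes "bilinear_game_payoff P1 P2 u" "s1 \<in> P1" "t1 \<in> P1" "s2 \<in> P2" "0 \<le> l" "l \<le> 1"
  shows "u (l *\<^sub>R s1 + (1 - l) *\<^sub>R t1, s2) = l * u (s1, s2) + (1 - l) * u (t1, s2)"
  using conjunct1[OF assms(1)[unfolded bilinear_game_payoff_def, rule_format, of s1 s2 t1 s2 l 1]]
    assms(2-) by simp

lemma bilinear_game_payoff_snd:
  assumes "bilinear_game_payoff P1 P2 u" "s1 \<in> P1" "s2 \<in> P2" "t2 \<in> P2" "0 \<le> l" "l \<le> 1"
  shows "u (s1, l *\<^sub>R s2 + (1 - l) *\<^sub>R t2) = l * u (s1, s2) + (1 - l) * u (s1, t2)"
  using conjunct2[OF assms(1)[unfolded bilinear_game_payoff_def, rule_format, of s1 s2 s1 t2 1 l]]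
    assms(2-) by simp

lemma affine_on_payoff_segment_fst:
  assumes "convex P1" "bilinear_game_payoff P1 P2 u1" "bilinear_game_payoff P1 P2 u2"
    and f: "\<forall>\<sigma>\<in>P1 \<times> P2. u2 \<sigma> = f (u1 \<sigma>)" and "s1 \<in> P1" "t1 \<in> P1" "s2 \<in> P2"
  shows "affine_on (closed_segment (u1 (s1, s2)) (u1 (t1, s2))) f"
proof (rule affine_on_closed_segment)
  fix l :: real assume l: "0 \<le> l" "l \<le> 1"
  define p where "p = l *\<^sub>R s1 + (1 - l) *\<^sub>R t1"
  have "p \<in> P1" unfolding p_def using l assms(1,5,6) by (intro convexD) auto
  have "f (l * u1 (s1, s2) + (1 - l) * u1 (t1, s2)) = f (u1 (p, s2))"
    unfolding p_def using bilinear_game_payoff_fst[OF assms(2,5-7) l] by simp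
  also have "\<dots> = u2 (p, s2)" using f \<open>p \<in> P1\<close> assms(7) by simp
  also have "\<dots> = l * u2 (s1, s2) + (1 - l) * u2 (t1, s2)"
    unfolding p_def using bilinear_game_payoff_fst[OF assms(3,5-7) l] .
  also have "\<dots> = l * f (u1 (s1, s2)) + (1 - l) * f (u1 (t1, s2))" using f assms(5-7) by simp
  finally show "f (l * u1 (s1, s2) + (1 - l) * u1 (t1, s2)) = \<dots>" .
qed

lemma affine_on_payoff_segment_snd:
  assumes "convex P2" "bilinear_game_payoff P1 P2 u1" "bilinear_game_payoff P1 P2 u2"
    and f: "\<forall>\<sigma>\<in>P1 \<times> P2. u2 \<sigma> = f (u1 \<sigma>)" and "s1 \<in> P1" "s2 \<in> P2" "t2 \<in> P2"
  shows "affine_on (closed_segment (u1 (s1, s2)) (u1 (s1, t2))) f"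
proof (rule affine_on_closed_segment)
  fix l :: real assume l: "0 \<le> l" "l \<le> 1"
  define p where "p = l *\<^sub>R s2 + (1 - l) *\<^sub>R t2"
  have "p \<in> P2" unfolding p_def using l assms(1,6,7) by (intro convexD) auto
  have "f (l * u1 (s1, s2) + (1 - l) * u1 (s1, t2)) = f (u1 (s1, p))"
    unfolding p_def using bilinear_game_payoff_snd[OF assms(2,5-7) l] by simp
  also have "\<dots> = u2 (s1, p)" using f \<open>p \<in> P2\<close> assms(5) by simp
  also have "\<dots> = l * u2 (s1, s2) + (1 - l) * u2 (s1, t2)"
    unfolding p_def using bilinear_game_payoff_snd[OF assms(3,5-7) l] .
  also have "\<dots> = l * f (u1 (s1, s2)) + (1 - l) * f (u1 (s1, t2))" using f assms(5-7) by simp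
  finally show "f (l * u1 (s1, s2) + (1 - l) * u1 (s1, t2)) = \<dots>" .
qed

lemma affine_on_payoff_segment:
  assumes "convex P1" "convex P2" "bilinear_game_payoff P1 P2 u1" "bilinear_game_payoff P1 P2 u2"
    and f: "\<forall>\<sigma>\<in>P1 \<times> P2. u2 \<sigma> = f (u1 \<sigma>)" and "\<sigma> \<in> P1 \<times> P2" "\<tau> \<in> P1 \<times> P2"
  shows "affine_on (closed_segment (u1 \<sigma>) (u1 \<tau>)) f"
proof -
  obtain s1 s2 t1 t2 where \<sigma>: "\<sigma> = (s1, s2)" "s1 \<in> P1" "s2 \<in> P2"
    and \<tau>: "\<tau> = (t1, t2)" "t1 \<in> P1" "t2 \<in> P2"
    using assms(6,7) by auto
  have "affine_on (closed_segment (u1 (s1, s2)) (u1 (t1, t2))) f"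
  proof (rule affine_on_square_diagonal[where c = "u1 (s1, t2)" and d = "u1 (t1, s2)"])
    show "affine_on (closed_segment (u1 (s1, t2)) (u1 (t1, t2))) f"
      using affine_on_payoff_segment_fst[OF assms(1,3,4) f] \<sigma> \<tau> by blast
    fix \<alpha> :: real assume \<alpha>: "0 \<le> \<alpha>" "\<alpha> \<le> 1"
    define p where "p = \<alpha> *\<^sub>R s1 + (1 - \<alpha>) *\<^sub>R t1"
    have "p \<in> P1" unfolding p_def using \<alpha> assms(1) \<sigma> \<tau> by (intro convexD) auto
    then have "affine_on (closed_segment (u1 (p, s2)) (u1 (p, t2))) f"
      using affine_on_payoff_segment_snd[OF assms(2,3,4) f] \<sigma> \<tau> by blast
    moreover have "u1 (p, s2) = \<alpha> * u1 (s1, s2) + (1 - \<alpha>) * u1 (t1, s2)"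
      and "u1 (p, t2) = \<alpha> * u1 (s1, t2) + (1 - \<alpha>) * u1 (t1, t2)"
      unfolding p_def using bilinear_game_payoff_fst[OF assms(3)] \<alpha> \<sigma> \<tau> by auto
    ultimately show "affine_on (closed_segment (\<alpha> * u1 (s1, s2) + (1 - \<alpha>) * u1 (t1, s2))
        (\<alpha> * u1 (s1, t2) + (1 - \<alpha>) * u1 (t1, t2))) f"
      by simp
  qed
  then show ?thesis using \<sigma> \<tau> by simp
qed

lemma strictly_competitive_imp_neg_affine:
  assumes "convex P1" "convex P2" "bilinear_game_payoff P1 P2 u1" "bilinear_game_payoff P1 P2 u2"
    and competitive: "\<forall>\<sigma>\<in>P1 \<times> P2. \<forall>\<tau>\<in>P1 \<times> P2. u1 \<sigma> \<ge> u1 \<tau> \<longleftrightarrow> u2 \<sigma> \<le> u2 \<tau>"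
  shows "\<exists>\<alpha> \<beta>. \<alpha> > 0 \<and> (\<forall>\<sigma>\<in>P1 \<times> P2. u2 \<sigma> = - \<alpha> * u1 \<sigma> + \<beta>)"
proof -
  have "\<forall>\<sigma> \<tau>. \<sigma> \<in> P1 \<times> P2 \<and> \<tau> \<in> P1 \<times> P2 \<and> u1 \<sigma> = u1 \<tau> \<longrightarrow> u2 \<sigma> = u2 \<tau>"
    using competitive by (metis order.refl order.antisym)
  then obtain f where f: "\<forall>\<sigma>\<in>P1 \<times> P2. u2 \<sigma> = f (u1 \<sigma>)"
    using function_factors_left_gen[of "\<lambda>\<sigma>. \<sigma> \<in> P1 \<times> P2" u1 u2] by blast
  have "strict_antimono_on (u1 ` (P1 \<times> P2)) f"
    using competitive f by (intro monotone_onI) (auto simp: not_le[symmetric])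
  moreover have "affine_on (u1 ` (P1 \<times> P2)) f"
  proof (rule affine_on_if_affine_on_closed_segments)
    fix p q assume "p \<in> u1 ` (P1 \<times> P2)" "q \<in> u1 ` (P1 \<times> P2)"
    then obtain \<sigma> \<tau> where "\<sigma> \<in> P1 \<times> P2" "\<tau> \<in> P1 \<times> P2" "p = u1 \<sigma>" "q = u1 \<tau>" by blast
    then show "affine_on (closed_segment p q) f" using affine_on_payoff_segment[OF assms(1-4) f] by simp
  qed
  ultimately obtain m k where "m < 0" "\<forall>x\<in>u1 ` (P1 \<times> P2). f x = m * x + k"
    using strict_antimono_affine_on_neg_slope by blast
  then show ?thesis using f by (intro exI[of _ "- m"] exI[of _ k]) auto
qed

lemma neg_affine_imp_strictly_competitive:
  fixes u1 u2 :: "'c \<Rightarrow> real"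
  assumes "\<alpha> > 0" "\<forall>\<sigma>\<in>S. u2 \<sigma> = - \<alpha> * u1 \<sigma> + \<beta>"
  shows "\<forall>\<sigma>\<in>S. \<forall>\<tau>\<in>S. u1 \<sigma> \<ge> u1 \<tau> \<longleftrightarrow> u2 \<sigma> \<le> u2 \<tau>"
  using assms by simp

lemma neg_affine_iff_zero_sum:
  fixes u1 u2 :: "'c \<Rightarrow> real"
  shows "(\<exists>\<alpha> \<beta>. \<alpha> > 0 \<and> (\<forall>\<sigma>\<in>S. u2 \<sigma> = - \<alpha> * u1 \<sigma> + \<beta>))
     \<longleftrightarrow> (\<exists>\<gamma> \<delta>. \<gamma> > 0 \<and> (\<forall>\<sigma>\<in>S. \<gamma> * u1 \<sigma> + \<delta> + u2 \<sigma> = 0))"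
proof -
  have "(\<forall>\<sigma>\<in>S. u2 \<sigma> = - \<alpha> * u1 \<sigma> + \<beta>) \<longleftrightarrow> (\<forall>\<sigma>\<in>S. \<alpha> * u1 \<sigma> + (- \<beta>) + u2 \<sigma> = 0)"
    for \<alpha> \<beta> :: real
    by (auto simp: algebra_simps)
  then show ?thesis by (metis minus_minus)
qed

theorem theorem2:
  fixes P1 :: "'a::real_vector set" and P2 :: "'b::real_vector set"
    and u1 u2 :: "'a \<times> 'b \<Rightarrow> real"
  assumes "convex P1" "convex P2" "P1 \<noteq> {}" "P2 \<noteq> {}"
    and "bilinear_game_payoff P1 P2 u1" "bilinear_game_payoff P1 P2 u2"
  shows "((\<forall>\<sigma>\<in>P1 \<times> P2. \<forall>\<tau>\<in>P1 \<times> P2. u1 \<sigma> \<ge> u1 \<tau> \<longleftrightarrow> u2 \<sigma> \<le> u2 \<tau>)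
          \<longleftrightarrow> (\<exists>\<alpha> \<beta>::real. \<alpha> > 0 \<and> (\<forall>\<sigma>\<in>P1 \<times> P2. u2 \<sigma> = - \<alpha> * u1 \<sigma> + \<beta>)))
       \<and> ((\<exists>\<alpha> \<beta>::real. \<alpha> > 0 \<and> (\<forall>\<sigma>\<in>P1 \<times> P2. u2 \<sigma> = - \<alpha> * u1 \<sigma> + \<beta>))
          \<longleftrightarrow> (\<exists>\<gamma> \<delta>::real. \<gamma> > 0 \<and>
                 (let v1 = (\<lambda>\<sigma>. \<gamma> * u1 \<sigma> + \<delta>) in \<forall>\<sigma>\<in>P1 \<times> P2. v1 \<sigma> + u2 \<sigma> = 0)))"
proof (intro conjI iffI)
  show "\<exists>\<alpha> \<beta>. \<alpha> > 0 \<and> (\<forall>\<sigma>\<in>P1 \<times> P2. u2 \<sigma> = - \<alpha> * u1 \<sigma> + \<beta>)"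
    if "\<forall>\<sigma>\<in>P1 \<times> P2. \<forall>\<tau>\<in>P1 \<times> P2. u1 \<sigma> \<ge> u1 \<tau> \<longleftrightarrow> u2 \<sigma> \<le> u2 \<tau>"
    using strictly_competitive_imp_neg_affine[OF assms(1,2,5,6) that] .
  show "\<forall>\<sigma>\<in>P1 \<times> P2. \<forall>\<tau>\<in>P1 \<times> P2. u1 \<sigma> \<ge> u1 \<tau> \<longleftrightarrow> u2 \<sigma> \<le> u2 \<tau>"
    if "\<exists>\<alpha> \<beta>. \<alpha> > 0 \<and> (\<forall>\<sigma>\<in>P1 \<times> P2. u2 \<sigma> = - \<alpha> * u1 \<sigma> + \<beta>)"
    using that neg_affine_imp_strictly_competitive by blast
qed (simp_all only: neg_affine_iff_zero_sum Let_def)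

end
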